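(* Let $f$ be a strongly hyperbolic function, $b>0$ and $s,t\neq0$. Then: (1) $\lim_{x\to\infty}\frac{f'(x)}{f'(x+b)}=1$; (2) $\lim_{x\to+\infty}\frac{f'(x)}{f(x)}=0$; (3) $\lim_{x\to+\infty}\frac{f(x+s)-f(x)}{f'(x)}=s$; (4) $\lim_{x\to+\infty}\frac{f(x+s)-f(x)}{f(x+t)-f(x)}=\frac{s}{t}$; (5) $\liminf_{x\to0+}\frac{f'(x)}{f(x)}=-\infty$.
   Context: $\mathbb{R}^+=(0,\infty)$. A function $f:\mathbb{R}^+\to\mathbb{R}^+$ is strongly hyperbolic if: (1) $\lim_{x\to0+}f(x)=+\infty$ and $\lim_{x\to+\infty}f(x)=0$; (2) $f$ is strictly convex; (3) for each $b\in\mathbb{R}$, $\lim_{x\to+\infty}f(x+b)/f(x)=1$; (4) $f$ is differentiable; (5) $x\mapsto\ln|f'(x)|$ is strictly convex. *)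

theory Defs
  imports "HOL-Analysis.Analysis"
begin

definition strictly_convex_on :: "real set \<Rightarrow> (real \<Rightarrow> real) \<Rightarrow> bool" where
  "strictly_convex_on S f \<longleftrightarrow> convex S \<and>
     (\<forall>x\<in>S. \<forall>y\<in>S. x \<noteq> y \<longrightarrow> (\<forall>u::real. 0 < u \<and> u < 1 \<longrightarrow>
        f ((1 - u) * x + u * y) < (1 - u) * f x + u * f y))"

text \<open>Strongly hyperbolic functions f : (0,oo) -> (0,oo), represented as real functions
  whose values outside (0,oo) are irrelevant.\<close>
definition strongly_hyperbolic :: "(real \<Rightarrow> real) \<Rightarrow> bool" where
  "strongly_hyperbolic f \<longleftrightarrow>
     (\<forall>x>0. f x > 0) \<and>
     filterlim f at_top (at_right 0) \<and>
     (f \<longlongrightarrow> 0) at_top \<and>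
     strictly_convex_on {0<..} f \<and>
     (\<forall>b::real. ((\<lambda>x. f (x + b) / f x) \<longlongrightarrow> 1) at_top) \<and>
     (\<forall>x>0. f differentiable (at x)) \<and>
     strictly_convex_on {0<..} (\<lambda>x. ln \<bar>deriv f x\<bar>)"

end

theory Submission
  imports Defs
begin

text \<open>Convexity of \<open>f\<close> makes \<open>f'\<close> negative and nondecreasing, and convexity of \<open>ln \<bar>f'\<bar>\<close>
  makes \<open>f'(x) / f'(x + b) \<ge> 1\<close> nonincreasing in \<open>x\<close>. If it stayed \<open>\<ge> L > 1\<close>, then
  \<open>f(x) - L f(x + b)\<close> would be nonincreasing with limit 0, hence nonnegative, so that
  \<open>f(x + b) / f(x) \<le> 1/L\<close>, contradicting \<open>f(x + b) / f(x) \<longrightarrow> 1\<close>; this gives (1).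
  The tangent inequalities \<open>s f'(x) \<le> f(x + s) - f(x) \<le> s f'(x + s)\<close> then give (3), hence (4),
  and (2) follows from \<open>f(x) - f(x - 1) \<le> f'(x) < 0\<close> and \<open>f(x - 1) / f(x) \<longrightarrow> 1\<close>.
  For (5): if \<open>f'/f \<ge> y\<close> near 0, then \<open>ln f(x) - y x\<close> is nondecreasing there, so \<open>f\<close> stays
  bounded near 0.\<close>

lemma tendsto_at_top_shift:
  fixes g :: "real \<Rightarrow> 'a::topological_space"
  assumes "(g \<longlongrightarrow> l) at_top"
  shows "((\<lambda>x. g (x + c)) \<longlongrightarrow> l) at_top"
proof -
  have "filterlim (\<lambda>x. c + x) at_top at_top"
    by (rule filterlim_tendsto_add_at_top[OF tendsto_const filterlim_ident])
  from filterlim_compose[OF assms this] show ?thesis by (simp add: add.commute)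
qed

lemma strictly_convex_on_imp_convex_on:
  assumes "strictly_convex_on S f"
  shows "convex_on S f"
proof (rule convex_onI)
  show "convex S" using assms unfolding strictly_convex_on_def by blast
  fix t x y :: real assume t: "0 < t" "t < 1" and xy: "x \<in> S" "y \<in> S"
  show "f ((1 - t) *\<^sub>R x + t *\<^sub>R y) \<le> (1 - t) * f x + t * f y"
  proof (cases "x = y")
    case True
    thus ?thesis by (simp add: algebra_simps)
  next
    case False
    with assms t xy have "f ((1 - t) * x + t * y) < (1 - t) * f x + t * f y"
      unfolding strictly_convex_on_def by blast
    thus ?thesis by simp
  qed
qed

lemma convex_on_open_above_tangent:
  fixes f :: "real \<Rightarrow> real"
  assumes "convex_on S f" "open S" "x \<in> S" "y \<in> S" "(f has_real_derivative f') (at x)"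
  shows "f' * (y - x) \<le> f y - f x"
proof (rule convex_on_imp_above_tangent[OF assms(1)])
  show "connected S" using assms(1) by (simp add: convex_connected convex_on_imp_convex)
  show "x \<in> interior S" using assms(2,3) by (simp add: interior_open)
  show "(f has_real_derivative f') (at x within S)"
    using assms(5) by (rule has_field_derivative_at_within)
qed (use assms in auto)

lemma convex_on_deriv_mono:
  fixes f :: "real \<Rightarrow> real"
  assumes "convex_on S f" "open S" "x \<in> S" "y \<in> S" "x \<le> y"
    and "(f has_real_derivative f'x) (at x)" "(f has_real_derivative f'y) (at y)"
  shows "f'x \<le> f'y"
proof -
  have "f'x * (y - x) \<le> f y - f x" "f'y * (x - y) \<le> f x - f y"
    using convex_on_open_above_tangent[OF assms(1,2)] assms(3,4,6,7) by auto
  hence "(f'x - f'y) * (y - x) \<le> 0" by (simp add: algebra_simps)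
  thus ?thesis
    using assms(5) DERIV_unique[OF assms(6)] assms(7) by (cases "x = y") (auto simp: mult_le_0_iff)
qed

lemma convex_on_increment_mono:
  fixes g :: "real \<Rightarrow> real"
  assumes g: "convex_on S g" and S: "x \<in> S" "y + b \<in> S" and xy: "x \<le> y" and b: "0 \<le> b"
  shows "g (x + b) - g x \<le> g (y + b) - g y"
proof (cases "x = y + b")
  case True
  with xy b show ?thesis by simp
next
  case False
  define l where "l = b / (y - x + b)"
  have d: "y - x + b > 0" using xy b False by simp
  have l: "0 \<le> l" "l \<le> 1" using d b xy by (auto simp: l_def field_simps)
  have "l * (y - x + b) = b" using d by (simp add: l_def)
  hence "(1 - l) * x + l * (y + b) = x + b" "l * x + (1 - l) * (y + b) = y"
    by (simp_all add: algebra_simps)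
  hence "g (x + b) \<le> (1 - l) * g x + l * g (y + b)" "g y \<le> l * g x + (1 - l) * g (y + b)"
    using convex_onD[OF g, of l x "y + b"] convex_onD[OF g, of "1 - l" x "y + b"] l S by simp_all
  thus ?thesis by (simp add: algebra_simps)
qed

lemma log_convex_ratio_antimono:
  fixes h :: "real \<Rightarrow> real"
  assumes h: "convex_on S (\<lambda>x. ln (h x))" and pos: "\<And>x. x \<in> S \<Longrightarrow> h x > 0"
    and S: "x \<in> S" "y + b \<in> S" and xy: "x \<le> y" and b: "0 \<le> b"
  shows "h y / h (y + b) \<le> h x / h (x + b)"
proof -
  have "is_interval S" using convex_on_imp_convex[OF h] by (simp add: is_interval_convex_1)
  hence "x + b \<in> S" "y \<in> S"
    using mem_is_interval_1_I[OF _ S] xy b by auto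
  hence hpos: "h x > 0" "h y > 0" "h (x + b) > 0" "h (y + b) > 0" using pos S by auto
  have "ln (h (x + b)) - ln (h x) \<le> ln (h (y + b)) - ln (h y)"
    by (rule convex_on_increment_mono[OF h S xy b])
  hence "ln (h y * h (x + b)) \<le> ln (h x * h (y + b))"
    using hpos by (simp add: ln_mult)
  hence "h y * h (x + b) \<le> h x * h (y + b)"
    using hpos by (subst (asm) ln_le_cancel_iff) auto
  thus ?thesis
    using hpos by (simp add: divide_simps mult.commute)
qed

lemma deriv_nonpos_tendsto_zero_imp_nonneg:
  fixes h :: "real \<Rightarrow> real"
  assumes lim: "(h \<longlongrightarrow> 0) at_top"
    and deriv: "\<And>z. z > a \<Longrightarrow> (h has_real_derivative h' z) (at z) \<and> h' z \<le> 0"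
    and x: "x > a"
  shows "h x \<ge> 0"
proof (rule tendsto_upperbound[OF lim])
  have "h y \<le> h x" if "x \<le> y" for y
  proof (rule DERIV_nonpos_imp_nonincreasing[OF that])
    fix z assume "x \<le> z"
    with x deriv[of z] show "\<exists>d. (h has_real_derivative d) (at z) \<and> d \<le> 0" by auto
  qed
  thus "\<forall>\<^sub>F y in at_top. h y \<le> h x" by (rule eventually_mono[OF eventually_ge_at_top[of x]])
qed simp

lemma log_deriv_ge_imp_le_exp:
  fixes f :: "real \<Rightarrow> real"
  assumes xc: "x \<le> c"
    and deriv: "\<And>z. x \<le> z \<Longrightarrow> z \<le> c \<Longrightarrow> f z > 0 \<and> (f has_real_derivative f' z) (at z) \<and> y \<le> f' z / f z"
  shows "f x \<le> exp (y * (x - c)) * f c"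
proof -
  have "ln (f x) - y * x \<le> ln (f c) - y * c"
  proof (rule DERIV_nonneg_imp_nondecreasing[OF xc])
    fix z assume z: "x \<le> z" "z \<le> c"
    hence "((\<lambda>z. ln (f z) - y * z) has_real_derivative f' z / f z - y) (at z)"
      using deriv by (auto intro!: derivative_eq_intros simp: field_simps)
    thus "\<exists>d. ((\<lambda>z. ln (f z) - y * z) has_real_derivative d) (at z) \<and> 0 \<le> d"
      using deriv z by force
  qed
  hence "ln (f x) \<le> ln (exp (y * (x - c)) * f c)"
    using deriv[of c] xc by (simp add: ln_mult algebra_simps)
  thus ?thesis using deriv[of x] deriv[of c] xc by simp
qed

lemma convex_on_tendsto_zero_deriv_neg:
  fixes f :: "real \<Rightarrow> real"
  assumes f: "convex_on {a<..} f" and lim: "(f \<longlongrightarrow> 0) at_top"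
    and x: "x > a" "f x > 0" and deriv: "(f has_real_derivative f') (at x)"
  shows "f' < 0"
proof -
  have "\<forall>\<^sub>F y in at_top. f y < f x \<and> x \<le> y"
    using order_tendstoD(2)[OF lim x(2)] eventually_ge_at_top[of x] by (rule eventually_conj)
  then obtain y where y: "f y < f x" "x \<le> y"
    using eventually_happens'[OF trivial_limit_at_top_linorder] by blast
  have "f' * (y - x) \<le> f y - f x"
    by (rule convex_on_open_above_tangent[OF f _ _ _ deriv]) (use x y in auto)
  with y have "f' * (y - x) < 0" by linarith
  with y show ?thesis by (simp add: mult_less_0_iff)
qed

lemma strongly_hyperbolic_pos: "strongly_hyperbolic f \<Longrightarrow> x > 0 \<Longrightarrow> f x > 0"
  unfolding strongly_hyperbolic_def by auto

lemma strongly_hyperbolic_at_right_0: "strongly_hyperbolic f \<Longrightarrow> filterlim f at_top (at_right 0)"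
  unfolding strongly_hyperbolic_def by auto

lemma strongly_hyperbolic_tendsto_0: "strongly_hyperbolic f \<Longrightarrow> (f \<longlongrightarrow> 0) at_top"
  unfolding strongly_hyperbolic_def by auto

lemma strongly_hyperbolic_shift_ratio:
  "strongly_hyperbolic f \<Longrightarrow> ((\<lambda>x. f (x + c) / f x) \<longlongrightarrow> 1) at_top"
  unfolding strongly_hyperbolic_def by auto

lemma strongly_hyperbolic_has_deriv:
  "strongly_hyperbolic f \<Longrightarrow> x > 0 \<Longrightarrow> (f has_real_derivative deriv f x) (at x)"
  unfolding strongly_hyperbolic_def using DERIV_deriv_iff_real_differentiable by blast

lemma strongly_hyperbolic_convex_on: "strongly_hyperbolic f \<Longrightarrow> convex_on {0<..} f"
  unfolding strongly_hyperbolic_def by (blast intro: strictly_convex_on_imp_convex_on)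

lemma strongly_hyperbolic_ln_abs_deriv_convex_on:
  "strongly_hyperbolic f \<Longrightarrow> convex_on {0<..} (\<lambda>x. ln \<bar>deriv f x\<bar>)"
  unfolding strongly_hyperbolic_def by (blast intro: strictly_convex_on_imp_convex_on)

lemma strongly_hyperbolic_above_tangent:
  assumes sh: "strongly_hyperbolic f" and x: "x > 0" and y: "y > 0"
  shows "deriv f x * (y - x) \<le> f y - f x"
  by (rule convex_on_open_above_tangent[OF strongly_hyperbolic_convex_on[OF sh] open_greaterThan
        _ _ strongly_hyperbolic_has_deriv[OF sh x]])
     (use x y in simp_all)

lemma strongly_hyperbolic_deriv_neg: "strongly_hyperbolic f \<Longrightarrow> x > 0 \<Longrightarrow> deriv f x < 0"
  by (rule convex_on_tendsto_zero_deriv_neg[OF strongly_hyperbolic_convex_on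
        strongly_hyperbolic_tendsto_0 _ strongly_hyperbolic_pos strongly_hyperbolic_has_deriv])

lemma strongly_hyperbolic_deriv_ratio_ge_1:
  assumes sh: "strongly_hyperbolic f" and "x > 0" "b \<ge> 0"
  shows "deriv f x / deriv f (x + b) \<ge> 1"
proof -
  have xb: "x + b > 0" using assms by simp
  have "deriv f x \<le> deriv f (x + b)"
    by (rule convex_on_deriv_mono[OF strongly_hyperbolic_convex_on[OF sh] open_greaterThan _ _ _
          strongly_hyperbolic_has_deriv[OF sh \<open>x > 0\<close>] strongly_hyperbolic_has_deriv[OF sh xb]])
       (use assms in simp_all)
  moreover have "deriv f (x + b) < 0" using strongly_hyperbolic_deriv_neg[OF sh xb] .
  ultimately show ?thesis by (simp add: le_divide_eq)
qed

lemma strongly_hyperbolic_deriv_ratio_antimono: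
  assumes sh: "strongly_hyperbolic f" and "0 < x" "x \<le> y" "b \<ge> 0"
  shows "deriv f y / deriv f (y + b) \<le> deriv f x / deriv f (x + b)"
proof -
  have abs_pos: "\<bar>deriv f z\<bar> > 0" if "z \<in> {0<..}" for z
    using strongly_hyperbolic_deriv_neg[OF sh, of z] that by simp
  have "\<bar>deriv f y\<bar> / \<bar>deriv f (y + b)\<bar> \<le> \<bar>deriv f x\<bar> / \<bar>deriv f (x + b)\<bar>"
    by (rule log_convex_ratio_antimono[OF strongly_hyperbolic_ln_abs_deriv_convex_on[OF sh] abs_pos])
       (use assms in simp_all)
  moreover have "deriv f y < 0" "deriv f (y + b) < 0" "deriv f x < 0" "deriv f (x + b) < 0"
    using strongly_hyperbolic_deriv_neg[OF sh] assms by simp_all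
  ultimately show ?thesis by simp
qed

lemma strongly_hyperbolic_deriv_ratio_below:
  assumes sh: "strongly_hyperbolic f" and b: "b > 0" and L: "L > 1"
  shows "\<exists>x>0. deriv f x / deriv f (x + b) < L"
proof (rule ccontr)
  assume no_such_x: "\<not> ?thesis"
  have gap: "deriv f x - L * deriv f (x + b) \<le> 0" if "x > 0" for x
  proof -
    have "L \<le> deriv f x / deriv f (x + b)" using no_such_x that not_less by blast
    moreover have "deriv f (x + b) < 0" using strongly_hyperbolic_deriv_neg[OF sh] that b by simp
    ultimately show ?thesis by (simp add: le_divide_eq)
  qed
  have "f x - L * f (x + b) \<ge> 0" if "x > 0" for x
  proof (rule deriv_nonpos_tendsto_zero_imp_nonneg[OF _ _ that])
    show "((\<lambda>x. f x - L * f (x + b)) \<longlongrightarrow> 0) at_top"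
      using tendsto_diff[OF strongly_hyperbolic_tendsto_0[OF sh]
          tendsto_mult_right_zero[OF tendsto_at_top_shift[OF strongly_hyperbolic_tendsto_0[OF sh]]]]
      by simp
    fix z :: real assume "z > 0"
    thus "((\<lambda>x. f x - L * f (x + b)) has_real_derivative deriv f z - L * deriv f (z + b)) (at z)
        \<and> deriv f z - L * deriv f (z + b) \<le> 0"
      using b gap strongly_hyperbolic_has_deriv[OF sh, of z] strongly_hyperbolic_has_deriv[OF sh, of "z + b"]
      by (auto intro!: DERIV_diff DERIV_cmult simp: DERIV_shift)
  qed
  hence "f (x + b) / f x \<le> 1 / L" if "x > 0" for x
    using that strongly_hyperbolic_pos[OF sh that] L by (simp add: divide_simps mult.commute)
  hence "\<forall>\<^sub>F x in at_top. f (x + b) / f x \<le> 1 / L"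
    by (rule eventually_mono[OF eventually_gt_at_top[of 0]])
  hence "1 \<le> 1 / L"
    using tendsto_upperbound[OF strongly_hyperbolic_shift_ratio[OF sh]] by simp
  with L show False by (simp add: divide_simps)
qed

lemma strongly_hyperbolic_deriv_ratio_tendsto:
  assumes sh: "strongly_hyperbolic f" and b: "b > 0"
  shows "((\<lambda>x. deriv f x / deriv f (x + b)) \<longlongrightarrow> 1) at_top"
proof (rule order_tendstoI)
  fix a :: real assume "a < 1"
  show "\<forall>\<^sub>F x in at_top. a < deriv f x / deriv f (x + b)"
    using eventually_gt_at_top[of 0]
  proof eventually_elim
    case (elim x)
    show ?case using strongly_hyperbolic_deriv_ratio_ge_1[OF sh elim, of b] b \<open>a < 1\<close> by simp
  qed
next
  fix a :: real assume "a > 1"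
  then obtain x0 where x0: "x0 > 0" "deriv f x0 / deriv f (x0 + b) < a"
    using strongly_hyperbolic_deriv_ratio_below[OF sh b] by blast
  show "\<forall>\<^sub>F x in at_top. deriv f x / deriv f (x + b) < a"
    using eventually_ge_at_top[of x0]
  proof eventually_elim
    case (elim x)
    have "deriv f x / deriv f (x + b) \<le> deriv f x0 / deriv f (x0 + b)"
      by (rule strongly_hyperbolic_deriv_ratio_antimono[OF sh x0(1) elim]) (use b in simp)
    with x0(2) show ?case by linarith
  qed
qed

lemma strongly_hyperbolic_deriv_shift_ratio_tendsto:
  assumes sh: "strongly_hyperbolic f"
  shows "((\<lambda>x. deriv f (x + s) / deriv f x) \<longlongrightarrow> 1) at_top"
proof (cases s "0::real" rule: linorder_cases)
  case less
  from tendsto_at_top_shift[OF strongly_hyperbolic_deriv_ratio_tendsto[OF sh, of "- s"], of s] less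
  show ?thesis by simp
next
  case equal
  have "\<forall>\<^sub>F x in at_top. deriv f (x + s) / deriv f x = 1"
    using eventually_gt_at_top[of 0]
    by eventually_elim (use strongly_hyperbolic_deriv_neg[OF sh] equal in force)
  thus ?thesis by (rule tendsto_eventually)
next
  case greater
  from tendsto_inverse[OF strongly_hyperbolic_deriv_ratio_tendsto[OF sh greater]]
  show ?thesis by simp
qed

lemma strongly_hyperbolic_increment_over_deriv_tendsto:
  assumes sh: "strongly_hyperbolic f"
  shows "((\<lambda>x. (f (x + s) - f x) / deriv f x) \<longlongrightarrow> s) at_top"
proof (rule tendsto_sandwich)
  have "((\<lambda>x. s * (deriv f (x + s) / deriv f x)) \<longlongrightarrow> s * 1) at_top"
    by (intro tendsto_mult tendsto_const strongly_hyperbolic_deriv_shift_ratio_tendsto[OF sh])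
  thus "((\<lambda>x. s * (deriv f (x + s) / deriv f x)) \<longlongrightarrow> s) at_top" by simp
  show "\<forall>\<^sub>F x in at_top. s * (deriv f (x + s) / deriv f x) \<le> (f (x + s) - f x) / deriv f x"
    using eventually_gt_at_top[of "\<bar>s\<bar>"]
  proof eventually_elim
    case (elim x)
    hence "x > 0" "x + s > 0" by auto
    hence "f (x + s) - f x \<le> deriv f (x + s) * s" "deriv f x < 0"
      using strongly_hyperbolic_above_tangent[OF sh, of "x + s" x] strongly_hyperbolic_deriv_neg[OF sh]
      by auto
    thus ?case by (simp add: le_divide_eq mult.commute)
  qed
  show "\<forall>\<^sub>F x in at_top. (f (x + s) - f x) / deriv f x \<le> s"
    using eventually_gt_at_top[of "\<bar>s\<bar>"]
  proof eventually_elim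
    case (elim x)
    hence "x > 0" "x + s > 0" by auto
    hence "deriv f x * s \<le> f (x + s) - f x" "deriv f x < 0"
      using strongly_hyperbolic_above_tangent[OF sh, of x "x + s"] strongly_hyperbolic_deriv_neg[OF sh]
      by auto
    thus ?case by (simp add: divide_le_eq mult.commute)
  qed
qed simp

lemma strongly_hyperbolic_log_deriv_tendsto_0:
  assumes sh: "strongly_hyperbolic f"
  shows "((\<lambda>x. deriv f x / f x) \<longlongrightarrow> 0) at_top"
proof (rule tendsto_sandwich)
  have "((\<lambda>x. 1 - f (x + -1) / f x) \<longlongrightarrow> 1 - 1) at_top"
    by (intro tendsto_diff tendsto_const strongly_hyperbolic_shift_ratio[OF sh])
  thus "((\<lambda>x. 1 - f (x + -1) / f x) \<longlongrightarrow> 0) at_top" by simp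
  show "\<forall>\<^sub>F x in at_top. 1 - f (x + -1) / f x \<le> deriv f x / f x"
    using eventually_gt_at_top[of 1]
  proof eventually_elim
    case (elim x)
    hence "f x - f (x + -1) \<le> deriv f x" and pos: "f x > 0"
      using strongly_hyperbolic_above_tangent[OF sh, of x "x + -1"] strongly_hyperbolic_pos[OF sh]
      by auto
    hence "(f x - f (x + -1)) / f x \<le> deriv f x / f x" by (intro divide_right_mono) auto
    thus ?case using pos by (simp add: diff_divide_distrib)
  qed
  show "\<forall>\<^sub>F x in at_top. deriv f x / f x \<le> 0"
    using eventually_gt_at_top[of 0]
  proof eventually_elim
    case (elim x)
    with strongly_hyperbolic_deriv_neg[OF sh] strongly_hyperbolic_pos[OF sh] show ?case
      by (simp add: divide_nonpos_pos less_imp_le)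
  qed
qed simp

lemma strongly_hyperbolic_increment_ratio_tendsto:
  assumes sh: "strongly_hyperbolic f" and t: "t \<noteq> 0"
  shows "((\<lambda>x. (f (x + s) - f x) / (f (x + t) - f x)) \<longlongrightarrow> s / t) at_top"
proof -
  have "((\<lambda>x. ((f (x + s) - f x) / deriv f x) / ((f (x + t) - f x) / deriv f x)) \<longlongrightarrow> s / t) at_top"
    by (intro tendsto_divide strongly_hyperbolic_increment_over_deriv_tendsto[OF sh] t)
  moreover have "\<forall>\<^sub>F x in at_top. ((f (x + s) - f x) / deriv f x) / ((f (x + t) - f x) / deriv f x)
      = (f (x + s) - f x) / (f (x + t) - f x)"
    using eventually_gt_at_top[of 0]
    by eventually_elim (use strongly_hyperbolic_deriv_neg[OF sh] in \<open>force simp: divide_simps\<close>)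
  ultimately show ?thesis by (rule Lim_transform_eventually)
qed

lemma strongly_hyperbolic_log_deriv_unbounded_below:
  assumes sh: "strongly_hyperbolic f"
  shows "\<not> (\<forall>\<^sub>F x in at_right 0. y < deriv f x / f x)"
proof
  assume "\<forall>\<^sub>F x in at_right 0. y < deriv f x / f x"
  then obtain d :: real where d: "d > 0" "\<And>x. 0 < x \<Longrightarrow> x < d \<Longrightarrow> y < deriv f x / f x"
    unfolding eventually_at_right[of 0 1, OF zero_less_one] by auto
  define c where "c = d / 2"
  have c: "0 < c" "c < d" using d(1) by (simp_all add: c_def)
  have bound: "f x \<le> exp (\<bar>y\<bar> * c) * f c" if x: "0 < x" "x < c" for x
  proof -
    have "f x \<le> exp (y * (x - c)) * f c"
    proof (rule log_deriv_ge_imp_le_exp[where f' = "deriv f"])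
      show "x \<le> c" using x by simp
      fix z assume "x \<le> z" "z \<le> c"
      hence z: "0 < z" "z < d" using x c by linarith+
      show "f z > 0 \<and> (f has_real_derivative deriv f z) (at z) \<and> y \<le> deriv f z / f z"
        using strongly_hyperbolic_pos[OF sh z(1)] strongly_hyperbolic_has_deriv[OF sh z(1)]
          d(2)[OF z] by simp
    qed
    also have "\<dots> \<le> exp (\<bar>y\<bar> * c) * f c"
    proof -
      have "y * (x - c) \<le> \<bar>y\<bar> * \<bar>x - c\<bar>" by (metis abs_ge_self abs_mult)
      also have "\<dots> \<le> \<bar>y\<bar> * c" using x by (intro mult_left_mono) auto
      finally show ?thesis using strongly_hyperbolic_pos[OF sh c(1)] by simp
    qed
    finally show ?thesis .
  qed
  have "\<forall>\<^sub>F x in at_right 0. exp (\<bar>y\<bar> * c) * f c < f x"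
    using strongly_hyperbolic_at_right_0[OF sh] by (simp add: filterlim_at_top_dense)
  moreover have "\<forall>\<^sub>F x in at_right 0. x \<in> {0<..<c}" by (rule eventually_at_right_real[OF c(1)])
  ultimately have "\<forall>\<^sub>F x in at_right 0. exp (\<bar>y\<bar> * c) * f c < f x \<and> x \<in> {0<..<c}"
    by (rule eventually_conj)
  then obtain x where x: "exp (\<bar>y\<bar> * c) * f c < f x" "0 < x" "x < c"
    using eventually_happens'[OF trivial_limit_at_right_real] by auto
  with bound[OF x(2,3)] show False by linarith
qed

lemma strongly_hyperbolic_Liminf_log_deriv:
  assumes sh: "strongly_hyperbolic f"
  shows "Liminf (at_right 0) (\<lambda>x. ereal (deriv f x / f x)) = -\<infinity>"
proof (rule ccontr)
  assume "Liminf (at_right 0) (\<lambda>x. ereal (deriv f x / f x)) \<noteq> -\<infinity>"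
  then obtain y :: real where "ereal y < Liminf (at_right 0) (\<lambda>x. ereal (deriv f x / f x))"
    using ereal_dense2[of "-\<infinity>"] by auto
  hence "\<forall>\<^sub>F x in at_right 0. y < deriv f x / f x"
    by (auto dest: less_LiminfD)
  with strongly_hyperbolic_log_deriv_unbounded_below[OF sh, of y] show False by contradiction
qed

theorem lemma3p2:
  fixes f :: "real \<Rightarrow> real" and b s t :: real
  assumes "strongly_hyperbolic f" and "b > 0" and "s \<noteq> 0" and "t \<noteq> 0"
  shows "((\<lambda>x. deriv f x / deriv f (x + b)) \<longlongrightarrow> 1) at_top \<and>
     ((\<lambda>x. deriv f x / f x) \<longlongrightarrow> 0) at_top \<and>
     ((\<lambda>x. (f (x + s) - f x) / deriv f x) \<longlongrightarrow> s) at_top \<and>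
     ((\<lambda>x. (f (x + s) - f x) / (f (x + t) - f x)) \<longlongrightarrow> s / t) at_top \<and>
     Liminf (at_right 0) (\<lambda>x. ereal (deriv f x / f x)) = -\<infinity>"
  by (intro conjI strongly_hyperbolic_deriv_ratio_tendsto[OF assms(1,2)]
      strongly_hyperbolic_log_deriv_tendsto_0[OF assms(1)]
      strongly_hyperbolic_increment_over_deriv_tendsto[OF assms(1), of s]
      strongly_hyperbolic_increment_ratio_tendsto[OF assms(1,4), of s]
      strongly_hyperbolic_Liminf_log_deriv[OF assms(1)])

end
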